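(* Let $f$ and $F$ be the density and CDF of the standard Gaussian distribution. For every $\alpha\in(0,1)$ and every $z\in\mathbb{R}$, $$\frac{f(z)|z|^\alpha}{(1-F(z))^{1-\alpha}} \le \frac{2}{\alpha}.$$ *)

theory Defs
  imports "HOL-Probability.Probability"
begin

definition std_normal_cdf :: "real \<Rightarrow> real" where
  "std_normal_cdf z = measure (density lborel std_normal_density) {..z}"

end

theory Submission
  imports Defs
begin

text \<open>
  On \<open>(z, z + h]\<close> the Gaussian density is at least \<open>f(|z| + h) = f(z) exp(-(h|z| + h^2/2))\<close>,
  so the choice \<open>h = 1 / max 1 |z|\<close> gives the Mills-ratio type bound
  \<open>1 - F(z) \<ge> exp(-3/2) f(z) / max 1 |z|\<close>. Inserted into the denominator it leaves
  \<open>f(z)^\<alpha> |z|^\<alpha> (max 1 |z|)^(1-\<alpha>) exp(3(1-\<alpha>)/2) \<le> max 1 |z| exp(-\<alpha>z^2/2) exp(3(1-\<alpha>)/2)\<close>,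
  and the elementary inequalities \<open>\<alpha> \<le> exp(\<alpha>-1)\<close> and \<open>t exp(-t) \<le> exp(-1)\<close> bound this by \<open>2/\<alpha>\<close>.
\<close>

lemma std_normal_density_antimono:
  assumes "\<bar>x\<bar> \<le> \<bar>y\<bar>"
  shows "std_normal_density y \<le> std_normal_density x"
proof -
  have "x\<^sup>2 \<le> y\<^sup>2"
    using assms by (metis abs_ge_zero power2_abs power_mono)
  then show ?thesis
    unfolding std_normal_density_def by (simp add: divide_right_mono)
qed

lemma std_normal_density_shift:
  "std_normal_density (\<bar>z\<bar> + h) = exp (- (\<bar>z\<bar> * h + h\<^sup>2 / 2)) * std_normal_density z"
  unfolding std_normal_density_def
  by (simp add: power2_eq_square field_simps flip: exp_add)

lemma std_normal_density_le_exp: "std_normal_density z \<le> exp (- z\<^sup>2 / 2)"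
proof -
  have "1 \<le> sqrt (2 * pi)"
    using pi_gt3 by simp
  then show ?thesis
    unfolding std_normal_density_def by (simp add: divide_le_eq)
qed

lemma std_normal_density_powr_le:
  assumes "0 \<le> \<alpha>"
  shows "std_normal_density z powr \<alpha> \<le> exp (- \<alpha> * z\<^sup>2 / 2)"
proof -
  have "std_normal_density z powr \<alpha> \<le> exp (- z\<^sup>2 / 2) powr \<alpha>"
    using assms std_normal_density_le_exp by (intro powr_mono2) auto
  then show ?thesis
    by (simp add: exp_powr_real ac_simps)
qed

lemma one_minus_std_normal_cdf:
  "1 - std_normal_cdf z = measure (density lborel std_normal_density) {z<..}"
proof -
  let ?M = "density lborel std_normal_density"
  interpret prob_space ?M
    by (rule prob_space_normal_density) simp
  have "space ?M - {..z} = {z<..}"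
    by auto
  then show ?thesis
    unfolding std_normal_cdf_def using prob_compl[of "{..z}"] by simp
qed

lemma std_normal_tail_ge_shifted_density:
  assumes "0 < h"
  shows "h * std_normal_density (\<bar>z\<bar> + h) \<le> 1 - std_normal_cdf z"
proof -
  let ?M = "density lborel std_normal_density"
  interpret prob_space ?M
    by (rule prob_space_normal_density) simp
  have "ennreal (h * std_normal_density (\<bar>z\<bar> + h)) =
      (\<integral>\<^sup>+ x. ennreal (std_normal_density (\<bar>z\<bar> + h)) * indicator {z<..z+h} x \<partial>lborel)"
    using assms by (subst nn_integral_cmult_indicator) (auto simp: ennreal_mult mult.commute)
  also have "\<dots> \<le> (\<integral>\<^sup>+ x. ennreal (std_normal_density x) * indicator {z<..z+h} x \<partial>lborel)"
  proof (rule nn_integral_mono)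
    fix x
    show "ennreal (std_normal_density (\<bar>z\<bar> + h)) * indicator {z<..z+h} x
        \<le> ennreal (std_normal_density x) * indicator {z<..z+h} x"
    proof (cases "x \<in> {z<..z+h}")
      case True
      then have "\<bar>x\<bar> \<le> \<bar>\<bar>z\<bar> + h\<bar>"
        using assms by auto
      then show ?thesis
        using True by (simp add: ennreal_leI std_normal_density_antimono)
    qed simp
  qed
  also have "\<dots> = ennreal (measure ?M {z<..z+h})"
    by (simp add: emeasure_density flip: emeasure_eq_measure)
  finally have "h * std_normal_density (\<bar>z\<bar> + h) \<le> measure ?M {z<..z+h}"
    by (simp add: ennreal_le_iff)
  also have "\<dots> \<le> measure ?M {z<..}"
    by (rule finite_measure_mono) auto
  finally show ?thesis
    by (simp add: one_minus_std_normal_cdf)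
qed

lemma std_normal_tail_ge:
  "exp (- 3 / 2) * std_normal_density z / max 1 \<bar>z\<bar> \<le> 1 - std_normal_cdf z"
proof -
  define h where "h = 1 / max 1 \<bar>z\<bar>"
  have h: "0 < h" "h \<le> 1" "\<bar>z\<bar> * h \<le> 1"
    unfolding h_def by (auto simp: field_simps)
  then have "h\<^sup>2 \<le> 1"
    by (simp add: power_le_one)
  with h have "exp (- 3 / 2) \<le> exp (- (\<bar>z\<bar> * h + h\<^sup>2 / 2))"
    by simp
  then have "h * (exp (- 3 / 2) * std_normal_density z) \<le> h * std_normal_density (\<bar>z\<bar> + h)"
    using h by (simp add: std_normal_density_shift mult_right_mono)
  also have "\<dots> \<le> 1 - std_normal_cdf z"
    using h(1) by (rule std_normal_tail_ge_shifted_density)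
  finally show ?thesis
    by (simp add: h_def)
qed

lemma powr_ratio_le_of_le:
  fixes K Q c b \<alpha> :: real
  assumes "0 < K" "0 < c" "c * K \<le> Q" "0 \<le> b" "\<alpha> \<le> 1"
  shows "K * b / Q powr (1 - \<alpha>) \<le> K powr \<alpha> * b / c powr (1 - \<alpha>)"
proof -
  have "(c * K) powr (1 - \<alpha>) \<le> Q powr (1 - \<alpha>)"
    using assms by (intro powr_mono2) auto
  then have cK: "c powr (1 - \<alpha>) * K powr (1 - \<alpha>) \<le> Q powr (1 - \<alpha>)"
    using assms by (simp add: powr_mult)
  have "K * b * c powr (1 - \<alpha>) = K powr \<alpha> * b * (c powr (1 - \<alpha>) * K powr (1 - \<alpha>))"
    using assms by (simp add: ac_simps flip: powr_add)
  also have "\<dots> \<le> K powr \<alpha> * b * Q powr (1 - \<alpha>)"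
    using assms cK by (intro mult_left_mono) auto
  finally have "K * b * c powr (1 - \<alpha>) \<le> K powr \<alpha> * b * Q powr (1 - \<alpha>)" .
  then show ?thesis
    using assms by (simp add: divide_simps)
qed

lemma le_exp_diff_one: "x \<le> exp (x - 1 :: real)"
  using exp_ge_add_one_self[of "x - 1"] by simp

lemma mult_exp_neg_le: "t * exp (- t) \<le> exp (- 1 :: real)"
proof -
  have "t * exp (- t) \<le> exp (t - 1) * exp (- t)"
    by (simp add: le_exp_diff_one mult_right_mono)
  then show ?thesis
    by (simp flip: exp_add)
qed

lemma max_mult_exp_le:
  fixes \<alpha> a :: real
  assumes "0 < \<alpha>" "\<alpha> \<le> 1" "0 \<le> a"
  shows "max 1 a * exp (- \<alpha> * a\<^sup>2 / 2) * exp (3 / 2 * (1 - \<alpha>)) \<le> 2 / \<alpha>"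
proof -
  have "\<alpha> * (max 1 a * exp (- \<alpha> * a\<^sup>2 / 2)) \<le> exp (\<alpha> - 1)"
  proof (cases "a \<le> 1")
    case True
    have "\<alpha> * exp (- \<alpha> * a\<^sup>2 / 2) \<le> \<alpha>"
      using assms by (intro mult_left_le) auto
    then show ?thesis
      using True le_exp_diff_one[of \<alpha>] by simp
  next
    case False
    let ?x = "\<alpha> * a * exp (- \<alpha> * a\<^sup>2 / 2)"
    have "?x\<^sup>2 = \<alpha> * ((\<alpha> * a\<^sup>2) * exp (- (\<alpha> * a\<^sup>2)))"
      by (simp add: power2_eq_square algebra_simps flip: exp_add)
    also have "\<dots> \<le> exp (\<alpha> - 1) * exp (- 1)"
      using assms by (intro mult_mono le_exp_diff_one mult_exp_neg_le) auto
    also have "\<dots> = (exp (\<alpha> / 2 - 1))\<^sup>2"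
      by (simp add: power2_eq_square flip: exp_add)
    finally have "?x \<le> exp (\<alpha> / 2 - 1)"
      by (rule power2_le_imp_le) simp
    also have "\<dots> \<le> exp (\<alpha> - 1)"
      using assms by simp
    finally show ?thesis
      using False by (simp add: mult.assoc)
  qed
  then have "\<alpha> * (max 1 a * exp (- \<alpha> * a\<^sup>2 / 2)) * exp (3 / 2 * (1 - \<alpha>))
      \<le> exp (\<alpha> - 1) * exp (3 / 2 * (1 - \<alpha>))"
    by (rule mult_right_mono) simp
  also have "\<dots> \<le> exp (1 / 2)"
    using assms by (simp add: field_simps flip: exp_add)
  finally show ?thesis
    using assms exp_half_le2 by (simp add: field_simps)
qed

theorem lemma5:
  fixes \<alpha> z :: real
  assumes "0 < \<alpha>" and "\<alpha> < 1"
  shows "std_normal_density z * \<bar>z\<bar> powr \<alpha> / (1 - std_normal_cdf z) powr (1 - \<alpha>) \<le> 2 / \<alpha>"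
proof -
  let ?K = "std_normal_density z" and ?m = "max 1 \<bar>z\<bar>"
  define c where "c = exp (- 3 / 2) / ?m"
  have "0 < ?K"
    by (simp add: normal_density_pos)
  have "c * ?K \<le> 1 - std_normal_cdf z"
    using std_normal_tail_ge[of z] by (simp add: c_def)
  then have "?K * \<bar>z\<bar> powr \<alpha> / (1 - std_normal_cdf z) powr (1 - \<alpha>)
      \<le> ?K powr \<alpha> * \<bar>z\<bar> powr \<alpha> / c powr (1 - \<alpha>)"
    using \<open>0 < ?K\<close> assms by (intro powr_ratio_le_of_le) (auto simp: c_def)
  also have "\<dots> = ?K powr \<alpha> * (\<bar>z\<bar> powr \<alpha> * ?m powr (1 - \<alpha>)) * exp (3 / 2 * (1 - \<alpha>))"
  proof -
    have "1 / c powr (1 - \<alpha>) = ?m powr (1 - \<alpha>) * exp (3 / 2 * (1 - \<alpha>))"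
      by (simp add: c_def powr_divide exp_powr_real) (simp add: exp_minus field_simps)
    then show ?thesis
      by (metis mult.assoc times_divide_eq_right mult_1_right)
  qed
  also have "\<dots> \<le> exp (- \<alpha> * z\<^sup>2 / 2) * ?m * exp (3 / 2 * (1 - \<alpha>))"
  proof -
    have "\<bar>z\<bar> powr \<alpha> * ?m powr (1 - \<alpha>) \<le> ?m powr \<alpha> * ?m powr (1 - \<alpha>)"
      using assms by (intro mult_right_mono powr_mono2) auto
    also have "\<dots> = ?m"
      by (simp flip: powr_add)
    finally show ?thesis
      using assms by (intro mult_right_mono mult_mono std_normal_density_powr_le) auto
  qed
  also have "\<dots> \<le> 2 / \<alpha>"
    using max_mult_exp_le[of \<alpha> "\<bar>z\<bar>"] assms by (simp add: ac_simps)
  finally show ?thesis .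
qed

end
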